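(* Let $\{c_k\}_{k\ge1}$ be i.i.d. random variables whose common distribution is absolutely continuous on $[0,1]$ with almost everywhere positive and uniformly bounded density, let $\lambda>0$ and $l_k=e^{-\lambda k}$, and let $q(n)=\lfloor\log_2(\log n)\rfloor$. Then almost surely the following holds: for every $\varepsilon>0$ there exists $\delta>0$ such that for all sufficiently large $n$ and all $n',n''\in\{n,2n,\dots,2^{q(n)}n\}$, $$\frac{1}{\#(\mathcal{A}_{n'}\times\mathcal{A}_{n''})}\sum_{\substack{i\in\mathcal{A}_{n'},\,j\in\mathcal{A}_{n''}\\ i\ne j,\ |c_i-c_j|<\delta}}(-\log|c_i-c_j|)<\varepsilon.$$
   Context: $\mathcal{A}_n=\{n,\dots,2n-1\}$. *)

theory Defs
  imports "HOL-Probability.Probability"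
begin

definition blockA :: "nat \<Rightarrow> nat set" where
  "blockA n = {n..<2*n}"

definition qfun :: "nat \<Rightarrow> int" where
  "qfun n = \<lfloor>log 2 (ln (real n))\<rfloor>"

definition scales :: "nat \<Rightarrow> nat set" where
  "scales n = {2^t * n | t. int t \<le> qfun n}"

end

(*
  For delta <= 1 let g(t) = -ln |t| if |t| < delta and g(t) = 0 otherwise. Near 0 we have
  g(t) <= 2 |t|^(-1/2) and g(t)^2 <= 16 |t|^(-1/2), and the difference of two independent
  variables whose densities are bounded by B has density bounded by B; hence for i <> j the
  term g(c_i - c_j) has mean O(B sqrt delta) and second moment O(B).

  Sum these terms over the off-diagonal pairs of a dyadic square I_k x I_k', where
  I_k = [2^k, 2^(k+2)). For small delta the mean of the sum is at most (eps/2) 2^(k+k'), and as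
  only pairs sharing an index are correlated its variance is O(B 2^(k+k') (2^k + 2^k')).
  Chebyshev's inequality bounds the probability that the sum exceeds eps 2^(k+k') by
  O(2^(-K)) when K <= k, k' <= 2K, and even after a union bound over these (K+1)^2 squares the
  bounds are summable in K. By Borel-Cantelli, almost surely all these sums are eventually
  below eps 2^(k+k').

  Finally, if 2^K <= n < 2^(K+1), a scale n' = 2^t n has 2^t <= log n < n, so t <= K, the
  block A_n' lies in I_(K+t), and #A_n' >= 2^(K+t).
*)

theory Submission
  imports Defs
begin

section \<open>The logarithmic kernel\<close>

(* Since ln 0 = 0, the value at t = 0 is 0, as is the term of a pair with c_i = c_j in the theorem. *)
definition log_kernel :: "real \<Rightarrow> real \<Rightarrow> real" where
  "log_kernel \<delta> t = (if \<bar>t\<bar> < \<delta> then - ln \<bar>t\<bar> else 0)"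

definition inv_sqrt_kernel :: "real \<Rightarrow> real \<Rightarrow> real" where
  "inv_sqrt_kernel a t = (if t \<noteq> 0 \<and> \<bar>t\<bar> < a then \<bar>t\<bar> powr (-1/2) else 0)"

lemma log_kernel_measurable [measurable]: "log_kernel \<delta> \<in> borel_measurable borel"
  unfolding log_kernel_def by measurable

lemma inv_sqrt_kernel_measurable [measurable]: "inv_sqrt_kernel a \<in> borel_measurable borel"
  unfolding inv_sqrt_kernel_def by measurable

lemma minus_ln_le_powr:
  fixes y a :: real
  assumes "0 < y" "0 < a"
  shows "- ln y \<le> y powr (-a) / a"
proof -
  have "ln (y powr (-a)) \<le> y powr (-a) - 1"
    by (rule ln_le_minus_one) (use assms in simp)
  moreover have "ln (y powr (-a)) = - a * ln y"
    using assms by (simp add: ln_powr)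
  ultimately show ?thesis
    using assms by (simp add: field_simps)
qed

lemma log_kernel_nonneg: "\<delta> \<le> 1 \<Longrightarrow> 0 \<le> log_kernel \<delta> t"
  using ln_le_minus_one[of "\<bar>t\<bar>"] by (cases "t = 0") (auto simp: log_kernel_def)

lemma log_kernel_le_inv_sqrt_kernel:
  "log_kernel \<delta> t \<le> 2 * inv_sqrt_kernel \<delta> t"
  using minus_ln_le_powr[of "\<bar>t\<bar>" "1/2"]
  by (auto simp: log_kernel_def inv_sqrt_kernel_def)

lemma log_kernel_square_le_inv_sqrt_kernel:
  assumes "\<delta> \<le> 1"
  shows "(log_kernel \<delta> t)\<^sup>2 \<le> 16 * inv_sqrt_kernel 1 t"
proof (cases "t \<noteq> 0 \<and> \<bar>t\<bar> < \<delta>")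
  case True
  then have t: "0 < \<bar>t\<bar>" "\<bar>t\<bar> < 1"
    using assms by auto
  have "- ln \<bar>t\<bar> \<le> 4 * \<bar>t\<bar> powr (-1/4)"
    using minus_ln_le_powr[of "\<bar>t\<bar>" "1/4"] t by simp
  moreover have "0 \<le> - ln \<bar>t\<bar>"
    using t by simp
  ultimately have "(- ln \<bar>t\<bar>)\<^sup>2 \<le> (4 * \<bar>t\<bar> powr (-1/4))\<^sup>2"
    by (rule power_mono)
  also have "\<dots> = 16 * \<bar>t\<bar> powr (-1/2)"
    by (simp add: power2_eq_square powr_add[symmetric])
  finally show ?thesis
    using True t by (simp add: log_kernel_def inv_sqrt_kernel_def)
qed (auto simp: log_kernel_def inv_sqrt_kernel_def)

lemma nn_integral_powr_neg_half:
  assumes "0 < a"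
  shows "(\<integral>\<^sup>+t. ennreal (indicator {0..a} t * t powr (-1/2)) \<partial>lborel) = ennreal (2 * sqrt a)"
proof -
  have "((\<lambda>t. t powr (-1/2)) has_integral (a powr (-1/2 + 1) / (-1/2 + 1))) {0..a}"
    using assms by (intro has_integral_powr_from_0) auto
  then have "((\<lambda>t. t powr (-1/2)) has_integral (2 * sqrt a)) {0..a}"
    using assms by (simp add: powr_half_sqrt mult.commute)
  then have "((\<lambda>t. if t \<in> {0..a} then t powr (-1/2) else 0) has_integral (2 * sqrt a)) UNIV"
    by (subst has_integral_restrict_UNIV)
  also have "(\<lambda>t. if t \<in> {0..a} then t powr (-1/2) else 0) = (\<lambda>t. indicator {0..a} t * t powr (-1/2))"
    by (auto simp: indicator_def)
  finally show ?thesis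
    by (rule nn_integral_has_integral_lborel[rotated 2]) (auto simp: indicator_def)
qed

lemma nn_integral_inv_sqrt_kernel_le:
  assumes "0 < a"
  shows "(\<integral>\<^sup>+t. ennreal (inv_sqrt_kernel a t) \<partial>lborel) \<le> ennreal (4 * sqrt a)"
proof -
  define F where "F t = ennreal (indicator {0..a} t * t powr (-1/2))" for t
  have [measurable]: "F \<in> borel_measurable borel"
    unfolding F_def by measurable
  have "(\<integral>\<^sup>+t. ennreal (inv_sqrt_kernel a t) \<partial>lborel) \<le> (\<integral>\<^sup>+t. F t + F (0 + (-1) * t) \<partial>lborel)"
    by (intro nn_integral_mono) (auto simp: F_def inv_sqrt_kernel_def indicator_def)
  also have "\<dots> = (\<integral>\<^sup>+t. F t \<partial>lborel) + (\<integral>\<^sup>+t. F (0 + (-1) * t) \<partial>lborel)"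
    by (rule nn_integral_add) auto
  also have "(\<integral>\<^sup>+t. F (0 + (-1) * t) \<partial>lborel) = (\<integral>\<^sup>+t. F t \<partial>lborel)"
    using nn_integral_real_affine[of F "-1" 0] by simp
  also have "(\<integral>\<^sup>+t. F t \<partial>lborel) = ennreal (2 * sqrt a)"
    unfolding F_def using assms by (rule nn_integral_powr_neg_half)
  finally show ?thesis
    using assms by (simp flip: ennreal_plus)
qed

lemma nn_integral_log_kernel_le:
  assumes "0 < \<delta>"
  shows "(\<integral>\<^sup>+t. ennreal (log_kernel \<delta> t) \<partial>lborel) \<le> ennreal (8 * sqrt \<delta>)"
proof -
  have "(\<integral>\<^sup>+t. ennreal (log_kernel \<delta> t) \<partial>lborel) \<le> (\<integral>\<^sup>+t. 2 * ennreal (inv_sqrt_kernel \<delta> t) \<partial>lborel)"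
    by (intro nn_integral_mono order_trans[OF ennreal_leI[OF log_kernel_le_inv_sqrt_kernel]])
       (simp add: ennreal_mult')
  also have "\<dots> = 2 * (\<integral>\<^sup>+t. ennreal (inv_sqrt_kernel \<delta> t) \<partial>lborel)"
    by (rule nn_integral_cmult) auto
  also have "\<dots> \<le> 2 * ennreal (4 * sqrt \<delta>)"
    by (intro mult_left_mono nn_integral_inv_sqrt_kernel_le assms) auto
  finally show ?thesis
    by (simp add: ennreal_mult' mult.assoc[symmetric])
qed

lemma nn_integral_log_kernel_square_le:
  assumes "\<delta> \<le> 1"
  shows "(\<integral>\<^sup>+t. ennreal ((log_kernel \<delta> t)\<^sup>2) \<partial>lborel) \<le> ennreal 64"
proof -
  have "(\<integral>\<^sup>+t. ennreal ((log_kernel \<delta> t)\<^sup>2) \<partial>lborel) \<le> (\<integral>\<^sup>+t. 16 * ennreal (inv_sqrt_kernel 1 t) \<partial>lborel)"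
    by (intro nn_integral_mono order_trans[OF ennreal_leI[OF log_kernel_square_le_inv_sqrt_kernel[OF assms]]])
       (simp add: ennreal_mult')
  also have "\<dots> = 16 * (\<integral>\<^sup>+t. ennreal (inv_sqrt_kernel 1 t) \<partial>lborel)"
    by (rule nn_integral_cmult) auto
  also have "\<dots> \<le> 16 * ennreal (4 * sqrt 1)"
    by (intro mult_left_mono nn_integral_inv_sqrt_kernel_le) auto
  finally show ?thesis
    by (simp add: ennreal_mult' mult.assoc[symmetric])
qed

section \<open>Second moments of sums\<close>

lemma integrable_mult_of_square_integrable:
  fixes X Y :: "'a \<Rightarrow> real"
  assumes [measurable]: "X \<in> borel_measurable M" "Y \<in> borel_measurable M"
    and "integrable M (\<lambda>\<omega>. (X \<omega>)\<^sup>2)" "integrable M (\<lambda>\<omega>. (Y \<omega>)\<^sup>2)"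
  shows "integrable M (\<lambda>\<omega>. X \<omega> * Y \<omega>)"
proof (rule Bochner_Integration.integrable_bound)
  show "integrable M (\<lambda>\<omega>. (X \<omega>)\<^sup>2 + (Y \<omega>)\<^sup>2)"
    using assms by auto
  have "\<bar>x * y\<bar> \<le> x\<^sup>2 + y\<^sup>2" for x y :: real
  proof -
    have "2 * \<bar>x * y\<bar> \<le> x\<^sup>2 + y\<^sup>2"
      using sum_squares_bound[of "\<bar>x\<bar>" "\<bar>y\<bar>"] by (simp add: abs_mult mult.assoc)
    then show ?thesis
      using abs_ge_zero[of "x * y"] by linarith
  qed
  then show "AE \<omega> in M. norm (X \<omega> * Y \<omega>) \<le> norm ((X \<omega>)\<^sup>2 + (Y \<omega>)\<^sup>2)"
    by simp
qed simp

lemma integrable_square_sum: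
  fixes Y :: "'i \<Rightarrow> 'a \<Rightarrow> real"
  assumes "\<And>p. p \<in> P \<Longrightarrow> Y p \<in> borel_measurable M"
    and "\<And>p. p \<in> P \<Longrightarrow> integrable M (\<lambda>\<omega>. (Y p \<omega>)\<^sup>2)"
  shows "integrable M (\<lambda>\<omega>. (\<Sum>p\<in>P. Y p \<omega>)\<^sup>2)"
proof -
  have "integrable M (\<lambda>\<omega>. \<Sum>p\<in>P. \<Sum>q\<in>P. Y p \<omega> * Y q \<omega>)"
    using assms by (intro Bochner_Integration.integrable_sum integrable_mult_of_square_integrable)
  then show ?thesis
    by (simp add: power2_eq_square sum_product)
qed

lemma integral_square_sum_le:
  fixes Y :: "'i \<Rightarrow> 'a \<Rightarrow> real"
  assumes "finite P" and meas: "\<And>p. p \<in> P \<Longrightarrow> Y p \<in> borel_measurable M"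
    and sq_int: "\<And>p. p \<in> P \<Longrightarrow> integrable M (\<lambda>\<omega>. (Y p \<omega>)\<^sup>2)"
    and second_moment: "\<And>p. p \<in> P \<Longrightarrow> (\<integral>\<omega>. (Y p \<omega>)\<^sup>2 \<partial>M) \<le> v"
    and uncorrelated: "\<And>p q. p \<in> P \<Longrightarrow> q \<in> P \<Longrightarrow> \<not> R p q \<Longrightarrow> (\<integral>\<omega>. Y p \<omega> * Y q \<omega> \<partial>M) = 0"
  shows "(\<integral>\<omega>. (\<Sum>p\<in>P. Y p \<omega>)\<^sup>2 \<partial>M) \<le> (\<Sum>p\<in>P. real (card {q\<in>P. R p q})) * v"
proof -
  have int: "integrable M (\<lambda>\<omega>. Y p \<omega> * Y q \<omega>)" if "p \<in> P" "q \<in> P" for p q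
    using meas sq_int that by (intro integrable_mult_of_square_integrable)
  have mixed_moment: "(\<integral>\<omega>. Y p \<omega> * Y q \<omega> \<partial>M) \<le> v" if "p \<in> P" "q \<in> P" for p q
  proof -
    have "(\<integral>\<omega>. Y p \<omega> * Y q \<omega> \<partial>M) \<le> (\<integral>\<omega>. ((Y p \<omega>)\<^sup>2 + (Y q \<omega>)\<^sup>2) / 2 \<partial>M)"
    proof (rule integral_mono)
      show "Y p \<omega> * Y q \<omega> \<le> ((Y p \<omega>)\<^sup>2 + (Y q \<omega>)\<^sup>2) / 2" for \<omega>
        using sum_squares_bound[of "Y p \<omega>" "Y q \<omega>"] by simp
    qed (use int sq_int that in auto)
    also have "\<dots> = ((\<integral>\<omega>. (Y p \<omega>)\<^sup>2 \<partial>M) + (\<integral>\<omega>. (Y q \<omega>)\<^sup>2 \<partial>M)) / 2"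
      using sq_int that by simp
    also have "\<dots> \<le> v"
      using second_moment[OF that(1)] second_moment[OF that(2)] by simp
    finally show ?thesis .
  qed
  have "(\<integral>\<omega>. (\<Sum>p\<in>P. Y p \<omega>)\<^sup>2 \<partial>M) = (\<Sum>p\<in>P. \<Sum>q\<in>P. (\<integral>\<omega>. Y p \<omega> * Y q \<omega> \<partial>M))"
    using int by (simp add: power2_eq_square sum_product Bochner_Integration.integral_sum)
  also have "\<dots> = (\<Sum>p\<in>P. \<Sum>q\<in>{q\<in>P. R p q}. (\<integral>\<omega>. Y p \<omega> * Y q \<omega> \<partial>M))"
    using uncorrelated by (intro sum.cong refl sum.mono_neutral_right \<open>finite P\<close>) auto
  also have "\<dots> \<le> (\<Sum>p\<in>P. \<Sum>q\<in>{q\<in>P. R p q}. v)"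
    using mixed_moment by (intro sum_mono) auto
  finally show ?thesis
    by (simp add: sum_distrib_right)
qed

lemma (in prob_space) indep_var_centered_uncorrelated:
  fixes X Y :: "'a \<Rightarrow> real"
  assumes "indep_var borel X borel Y" "integrable M X" "integrable M Y"
  shows "expectation (\<lambda>\<omega>. (X \<omega> - expectation X) * (Y \<omega> - expectation Y)) = 0"
proof -
  have "indep_var borel (\<lambda>\<omega>. X \<omega> - expectation X) borel (\<lambda>\<omega>. Y \<omega> - expectation Y)"
    using indep_var_compose[OF assms(1), of "\<lambda>x. x - expectation X" borel "\<lambda>y. y - expectation Y" borel]
    by (simp add: comp_def)
  then show ?thesis
    using assms(2,3) by (simp add: indep_var_lebesgue_integral prob_space)
qed

section \<open>Dyadic blocks of indices\<close>

definition dyadic_block :: "nat \<Rightarrow> nat set" where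
  "dyadic_block k = {2^k..<2^(k+2)}"

definition dyadic_pairs :: "nat \<Rightarrow> nat \<Rightarrow> (nat \<times> nat) set" where
  "dyadic_pairs k k' = {p \<in> dyadic_block k \<times> dyadic_block k'. fst p \<noteq> snd p}"

definition dyadic_log_sum :: "real \<Rightarrow> (nat \<Rightarrow> real) \<Rightarrow> nat \<Rightarrow> nat \<Rightarrow> real" where
  "dyadic_log_sum \<delta> x k k' = (\<Sum>p\<in>dyadic_pairs k k'. log_kernel \<delta> (x (fst p) - x (snd p)))"

lemma card_dyadic_block: "card (dyadic_block k) = 3 * 2^k"
  by (simp add: dyadic_block_def power_add)

lemma finite_dyadic_pairs: "finite (dyadic_pairs k k')"
  unfolding dyadic_pairs_def dyadic_block_def by (auto intro: finite_subset)

definition proper_pairs :: "(nat \<times> nat) set" where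
  "proper_pairs = {p. 1 \<le> fst p \<and> 1 \<le> snd p \<and> fst p \<noteq> snd p}"

lemma dyadic_pairs_subset_proper_pairs: "dyadic_pairs k k' \<subseteq> proper_pairs"
proof -
  have "(1::nat) \<le> 2^k" "(1::nat) \<le> 2^k'"
    by simp_all
  then show ?thesis
    unfolding dyadic_pairs_def dyadic_block_def proper_pairs_def by auto
qed

lemma card_dyadic_pairs_le: "card (dyadic_pairs k k') \<le> 9 * 2^k * 2^k'"
proof -
  have "card (dyadic_pairs k k') \<le> card (dyadic_block k \<times> dyadic_block k')"
    by (rule card_mono) (auto simp: dyadic_pairs_def dyadic_block_def)
  then show ?thesis
    by (simp add: card_cartesian_product card_dyadic_block)
qed

lemma card_overlapping_dyadic_pairs_le:
  "card {q \<in> dyadic_pairs k k'. {fst p, snd p} \<inter> {fst q, snd q} \<noteq> {}} \<le> 6 * 2^k' + 6 * 2^k"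
proof -
  let ?S = "{fst p, snd p}"
  have "card {q \<in> dyadic_pairs k k'. ?S \<inter> {fst q, snd q} \<noteq> {}}
        \<le> card (?S \<times> dyadic_block k' \<union> dyadic_block k \<times> ?S)"
    by (rule card_mono) (auto simp: dyadic_pairs_def dyadic_block_def)
  also have "\<dots> \<le> card (?S \<times> dyadic_block k') + card (dyadic_block k \<times> ?S)"
    by (rule card_Un_le)
  also have "\<dots> \<le> 2 * (3 * 2^k') + (3 * 2^k) * 2"
    unfolding card_cartesian_product card_dyadic_block
    by (intro add_mono mult_right_mono mult_left_mono) (auto simp: card_insert_le_m1)
  finally show ?thesis
    by simp
qed

lemma sum_card_overlapping_dyadic_pairs_le:
  "(\<Sum>p\<in>dyadic_pairs k k'. real (card {q \<in> dyadic_pairs k k'. {fst p, snd p} \<inter> {fst q, snd q} \<noteq> {}}))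
     \<le> 54 * 2^(k+k') * (2^k + 2^k')"
proof -
  let ?P = "dyadic_pairs k k'"
  have "(\<Sum>p\<in>?P. real (card {q \<in> ?P. {fst p, snd p} \<inter> {fst q, snd q} \<noteq> {}}))
        \<le> (\<Sum>p\<in>?P. real (6 * 2^k' + 6 * 2^k))"
    by (intro sum_mono) (simp only: of_nat_le_iff card_overlapping_dyadic_pairs_le)
  also have "\<dots> = real (card ?P) * (6 * 2^k' + 6 * 2^k)"
    by simp
  also have "\<dots> \<le> real (9 * 2^k * 2^k') * (6 * 2^k' + 6 * 2^k)"
    by (intro mult_right_mono) (simp_all only: of_nat_le_iff card_dyadic_pairs_le, simp)
  also have "\<dots> = 54 * 2^(k+k') * (2^k + 2^k')"
    by (simp add: power_add algebra_simps)
  finally show ?thesis .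
qed

lemma scales_in_dyadic_block:
  assumes "2 \<le> n" "2^K \<le> n" "n < 2^(K+1)" "n' \<in> scales n"
  obtains k where "k \<in> {K..2*K}" "2^k \<le> n'" "blockA n' \<subseteq> dyadic_block k"
proof -
  obtain t where t: "n' = 2^t * n" "int t \<le> qfun n"
    using assms(4) unfolding scales_def by auto
  have "real t \<le> log 2 (ln (real n))"
    using t(2) unfolding qfun_def le_floor_iff by simp
  moreover have "0 < ln (real n)"
    using assms(1) by simp
  ultimately have "real (2^t) \<le> ln (real n)"
    by (simp add: le_log_iff powr_realpow)
  also have "\<dots> < real n"
    using assms(1) by (intro ln_less_self) simp
  also have "\<dots> < real (2^(K+1))"
    using assms(3) by (simp only: of_nat_less_iff)
  finally have "t < K + 1"
    by (simp only: of_nat_less_iff power_strict_increasing_iff[of 2])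
  show ?thesis
  proof
    show "K + t \<in> {K..2*K}"
      using \<open>t < K + 1\<close> by simp
    show "2^(K+t) \<le> n'"
      using assms(2) t(1) by (simp add: power_add)
    have "2 * n' < 2^(K+t+2)"
      using assms(3) t(1) by (simp add: power_add)
    then show "blockA n' \<subseteq> dyadic_block (K + t)"
      using \<open>2^(K+t) \<le> n'\<close> unfolding blockA_def dyadic_block_def by auto
  qed
qed

lemma close_pairs_log_sum_le_dyadic_log_sum:
  assumes "A \<subseteq> dyadic_block k" "A' \<subseteq> dyadic_block k'" "\<delta> \<le> 1"
  shows "(\<Sum>(i,j)\<in>{(i,j). i \<in> A \<and> j \<in> A' \<and> i \<noteq> j \<and> \<bar>x i - x j\<bar> < \<delta>}. - ln \<bar>x i - x j\<bar>)
           \<le> dyadic_log_sum \<delta> x k k'"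
proof -
  let ?C = "{(i,j). i \<in> A \<and> j \<in> A' \<and> i \<noteq> j \<and> \<bar>x i - x j\<bar> < \<delta>}"
  have "(\<Sum>(i,j)\<in>?C. - ln \<bar>x i - x j\<bar>) = (\<Sum>p\<in>?C. log_kernel \<delta> (x (fst p) - x (snd p)))"
    by (intro sum.cong) (auto simp: log_kernel_def)
  also have "\<dots> \<le> (\<Sum>p\<in>dyadic_pairs k k'. log_kernel \<delta> (x (fst p) - x (snd p)))"
    using assms by (intro sum_mono2 finite_dyadic_pairs log_kernel_nonneg) (auto simp: dyadic_pairs_def)
  finally show ?thesis
    unfolding dyadic_log_sum_def .
qed

lemma close_pairs_log_average_lt:
  assumes "0 < e" "\<delta> \<le> 1"
    and small: "\<And>K k k'. K0 \<le> K \<Longrightarrow> k \<in> {K..2*K} \<Longrightarrow> k' \<in> {K..2*K} \<Longrightarrow>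
                  dyadic_log_sum \<delta> x k k' < e * 2^(k+k')"
    and "2 \<le> n" "2^K0 \<le> n" "n' \<in> scales n" "n'' \<in> scales n"
  shows "(1 / real (card (blockA n' \<times> blockA n''))) *
           (\<Sum>(i,j)\<in>{(i,j). i \<in> blockA n' \<and> j \<in> blockA n'' \<and> i \<noteq> j \<and> \<bar>x i - x j\<bar> < \<delta>}.
              - ln \<bar>x i - x j\<bar>) < e"
proof -
  obtain K where K: "2^K \<le> n" "n < 2^(K+1)"
    using ex_power_ivl1[of 2 n] \<open>2 \<le> n\<close> by auto
  have "(2::nat)^K0 < 2^(K+1)"
    using \<open>2^K0 \<le> n\<close> K(2) by linarith
  then have "K0 \<le> K"
    by (simp only: power_strict_increasing_iff[of 2])
  obtain k where k: "k \<in> {K..2*K}" "2^k \<le> n'" "blockA n' \<subseteq> dyadic_block k"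
    using scales_in_dyadic_block[OF \<open>2 \<le> n\<close> K \<open>n' \<in> scales n\<close>] .
  obtain k' where k': "k' \<in> {K..2*K}" "2^k' \<le> n''" "blockA n'' \<subseteq> dyadic_block k'"
    using scales_in_dyadic_block[OF \<open>2 \<le> n\<close> K \<open>n'' \<in> scales n\<close>] .
  have card: "(2::real)^(k+k') \<le> real (card (blockA n' \<times> blockA n''))"
  proof -
    have "(2::nat)^(k+k') \<le> n' * n''"
      unfolding power_add using k(2) k'(2) by (rule mult_le_mono)
    then have "real (2^(k+k')) \<le> real (n' * n'')"
      by (simp only: of_nat_le_iff)
    then show ?thesis
      by (simp add: blockA_def card_cartesian_product)
  qed
  have "(\<Sum>(i,j)\<in>{(i,j). i \<in> blockA n' \<and> j \<in> blockA n'' \<and> i \<noteq> j \<and> \<bar>x i - x j\<bar> < \<delta>}.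
          - ln \<bar>x i - x j\<bar>) < e * real (card (blockA n' \<times> blockA n''))"
    using close_pairs_log_sum_le_dyadic_log_sum[OF k(3) k'(3) \<open>\<delta> \<le> 1\<close>, of x]
      small[OF \<open>K0 \<le> K\<close> k(1) k'(1)] mult_left_mono[OF card, of e] \<open>0 < e\<close>
    by linarith
  moreover have "0 < real (card (blockA n' \<times> blockA n''))"
    using card by (rule less_le_trans[rotated]) simp
  ultimately show ?thesis
    by (simp add: field_simps)
qed

lemma summable_square_times_half_power: "summable (\<lambda>K::nat. real ((K+1)^2) * (1/2)^K)"
proof (rule summable_ratio_test[where c="3/4" and N=4])
  fix K :: nat assume "4 \<le> K"
  then have "0 \<le> (real K - 4) * (real K + 2)"
    by simp
  then have "2 * (real K + 2)^2 \<le> 3 * (real K + 1)^2"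
    by (simp add: power2_eq_square algebra_simps)
  then have "(real K + 2)^2 * (1/2)^Suc K \<le> 3/4 * ((real K + 1)^2 * (1/2)^K)"
    by (simp add: field_simps)
  then show "norm (real ((Suc K + 1)^2) * (1/2)^Suc K) \<le> 3/4 * norm (real ((K+1)^2) * (1/2::real)^K)"
    by (simp add: add.commute)
qed simp

section \<open>Independent variables with bounded density\<close>

locale indep_bounded_density = prob_space M for M :: "'a measure" +
  fixes c :: "nat \<Rightarrow> 'a \<Rightarrow> real" and f :: "real \<Rightarrow> real" and B :: real
  assumes indep: "indep_vars (\<lambda>_. borel) c {1..}"
    and distributed: "\<And>k. 1 \<le> k \<Longrightarrow> distributed M lborel (c k) (\<lambda>x. ennreal (f x))"
    and density_le: "\<And>x. f x \<le> B"
    and B_pos: "0 < B"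
begin

lemma c_measurable: "1 \<le> k \<Longrightarrow> c k \<in> borel_measurable M"
  using indep by (auto simp: indep_vars_def)

lemma indep_var_functions_of_pairs:
  assumes "{i, j} \<inter> {k, l} = {}" "1 \<le> i" "1 \<le> j" "1 \<le> k" "1 \<le> l"
    and [measurable]: "\<phi> \<in> borel_measurable (borel \<Otimes>\<^sub>M borel)" "\<psi> \<in> borel_measurable (borel \<Otimes>\<^sub>M borel)"
  shows "indep_var borel (\<lambda>\<omega>. \<phi> (c i \<omega>, c j \<omega>)) borel (\<lambda>\<omega>. \<psi> (c k \<omega>, c l \<omega>))"
proof -
  have "indep_var (PiM {i, j} (\<lambda>_. borel)) (\<lambda>\<omega>. restrict (\<lambda>k. c k \<omega>) {i, j})
                  (PiM {k, l} (\<lambda>_. borel)) (\<lambda>\<omega>. restrict (\<lambda>k. c k \<omega>) {k, l})"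
    by (rule indep_var_restrict[OF indep]) (use assms in auto)
  then have "indep_var borel ((\<lambda>x. \<phi> (x i, x j)) \<circ> (\<lambda>\<omega>. restrict (\<lambda>k. c k \<omega>) {i, j}))
                       borel ((\<lambda>x. \<psi> (x k, x l)) \<circ> (\<lambda>\<omega>. restrict (\<lambda>k. c k \<omega>) {k, l}))"
    by (rule indep_var_compose) auto
  then show ?thesis
    by (simp add: comp_def)
qed

lemma distr_c_eq_density:
  assumes "1 \<le> k"
  shows "distr M borel (c k) = density lborel (\<lambda>x. ennreal (f x))"
proof -
  have "distr M borel (c k) = distr M lborel (c k)"
    by (rule distr_cong) auto
  also have "\<dots> = density lborel (\<lambda>x. ennreal (f x))"
    using distributed_distr_eq_density[OF distributed[OF assms]] by simp
  finally show ?thesis .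
qed

lemma distr_pair_eq_pair_measure:
  assumes "1 \<le> i" "1 \<le> j" "i \<noteq> j"
  shows "distr M (borel \<Otimes>\<^sub>M borel) (\<lambda>\<omega>. (c i \<omega>, c j \<omega>)) = distr M borel (c i) \<Otimes>\<^sub>M distr M borel (c j)"
proof -
  (* degenerate pairs (i, i) and (j, j), projected by fst *)
  have "indep_var borel (\<lambda>\<omega>. fst (c i \<omega>, c i \<omega>)) borel (\<lambda>\<omega>. fst (c j \<omega>, c j \<omega>))"
    using assms by (intro indep_var_functions_of_pairs) auto
  then show ?thesis
    by (simp add: indep_var_distribution_eq)
qed

lemma nn_integral_function_of_difference_le:
  assumes ij: "1 \<le> i" "1 \<le> j" "i \<noteq> j" and [measurable]: "H \<in> borel_measurable borel"
  shows "(\<integral>\<^sup>+\<omega>. H (c i \<omega> - c j \<omega>) \<partial>M) \<le> ennreal B * (\<integral>\<^sup>+t. H t \<partial>lborel)"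
proof -
  define N1 where "N1 = distr M borel (c i)"
  define N2 where "N2 = distr M borel (c j)"
  have [measurable]: "c i \<in> borel_measurable M" "c j \<in> borel_measurable M"
    using c_measurable ij by auto
  interpret N1: prob_space N1
    unfolding N1_def by (rule prob_space_distr) simp
  interpret N2: prob_space N2
    unfolding N2_def by (rule prob_space_distr) simp
  have [measurable]: "(\<lambda>x. ennreal (f x)) \<in> borel_measurable lborel"
    using distributed_borel_measurable[OF distributed] ij by simp
  have "sets (N1 \<Otimes>\<^sub>M N2) = sets (borel \<Otimes>\<^sub>M borel)"
    by (rule sets_pair_measure_cong) (simp_all add: N1_def N2_def)
  then have [measurable]: "(\<lambda>p. H (fst p - snd p)) \<in> borel_measurable (N1 \<Otimes>\<^sub>M N2)"
    by (subst measurable_cong_sets[OF _ refl]) auto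
  have "(\<integral>\<^sup>+\<omega>. H (c i \<omega> - c j \<omega>) \<partial>M) = (\<integral>\<^sup>+p. H (fst p - snd p) \<partial>(N1 \<Otimes>\<^sub>M N2))"
    unfolding N1_def N2_def by (simp add: nn_integral_distr flip: distr_pair_eq_pair_measure[OF ij])
  also have "\<dots> = (\<integral>\<^sup>+x. \<integral>\<^sup>+y. H (x - y) \<partial>N2 \<partial>N1)"
    by (simp add: N2.nn_integral_fst[symmetric])
  also have "\<dots> \<le> (\<integral>\<^sup>+x. ennreal B * (\<integral>\<^sup>+t. H t \<partial>lborel) \<partial>N1)"
  proof (rule nn_integral_mono)
    fix x :: real
    have "(\<integral>\<^sup>+y. H (x - y) \<partial>N2) = (\<integral>\<^sup>+y. ennreal (f y) * H (x + (-1) * y) \<partial>lborel)"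
      unfolding N2_def distr_c_eq_density[OF ij(2)] by (simp add: nn_integral_density)
    also have "\<dots> \<le> (\<integral>\<^sup>+y. ennreal B * H (x + (-1) * y) \<partial>lborel)"
      by (intro nn_integral_mono mult_right_mono ennreal_leI density_le) simp
    also have "\<dots> = ennreal B * (\<integral>\<^sup>+t. H t \<partial>lborel)"
      using nn_integral_real_affine[of H "-1" x] by (simp add: nn_integral_cmult)
    finally show "(\<integral>\<^sup>+y. H (x - y) \<partial>N2) \<le> ennreal B * (\<integral>\<^sup>+t. H t \<partial>lborel)" .
  qed
  also have "\<dots> = ennreal B * (\<integral>\<^sup>+t. H t \<partial>lborel)"
    by (simp add: N1.emeasure_space_1)
  finally show ?thesis .
qed

definition pair_log :: "real \<Rightarrow> nat \<times> nat \<Rightarrow> 'a \<Rightarrow> real" where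
  "pair_log \<delta> p \<omega> = log_kernel \<delta> (c (fst p) \<omega> - c (snd p) \<omega>)"

lemma pair_log_measurable:
  assumes "p \<in> proper_pairs"
  shows "pair_log \<delta> p \<in> borel_measurable M"
proof -
  have [measurable]: "c (fst p) \<in> borel_measurable M" "c (snd p) \<in> borel_measurable M"
    using assms c_measurable by (auto simp: proper_pairs_def)
  show ?thesis
    unfolding pair_log_def by measurable
qed

lemma nn_integral_pair_log_le:
  assumes "p \<in> proper_pairs" "0 < \<delta>"
  shows "(\<integral>\<^sup>+\<omega>. ennreal (pair_log \<delta> p \<omega>) \<partial>M) \<le> ennreal (8 * B * sqrt \<delta>)"
proof -
  have "(\<integral>\<^sup>+\<omega>. ennreal (pair_log \<delta> p \<omega>) \<partial>M) \<le> ennreal B * (\<integral>\<^sup>+t. ennreal (log_kernel \<delta> t) \<partial>lborel)"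
    unfolding pair_log_def using assms
    by (intro nn_integral_function_of_difference_le) (auto simp: proper_pairs_def)
  also have "\<dots> \<le> ennreal B * ennreal (8 * sqrt \<delta>)"
    using nn_integral_log_kernel_le[OF assms(2)] by (rule mult_left_mono) simp
  finally show ?thesis
    using B_pos by (simp add: ennreal_mult' mult_ac)
qed

lemma nn_integral_pair_log_square_le:
  assumes "p \<in> proper_pairs" "\<delta> \<le> 1"
  shows "(\<integral>\<^sup>+\<omega>. ennreal ((pair_log \<delta> p \<omega>)\<^sup>2) \<partial>M) \<le> ennreal (64 * B)"
proof -
  have "(\<integral>\<^sup>+\<omega>. ennreal ((pair_log \<delta> p \<omega>)\<^sup>2) \<partial>M) \<le> ennreal B * (\<integral>\<^sup>+t. ennreal ((log_kernel \<delta> t)\<^sup>2) \<partial>lborel)"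
    unfolding pair_log_def using assms
    by (intro nn_integral_function_of_difference_le) (auto simp: proper_pairs_def)
  also have "\<dots> \<le> ennreal B * ennreal 64"
    using nn_integral_log_kernel_square_le[OF assms(2)] by (rule mult_left_mono) simp
  finally show ?thesis
    using B_pos by (simp add: ennreal_mult' mult.commute)
qed

lemma integrable_pair_log:
  assumes "p \<in> proper_pairs" "\<delta> \<le> 1"
  shows "integrable M (pair_log \<delta> p)" "integrable M (\<lambda>\<omega>. (pair_log \<delta> p \<omega>)\<^sup>2)"
proof -
  have [measurable]: "pair_log \<delta> p \<in> borel_measurable M"
    using assms(1) by (rule pair_log_measurable)
  show sq: "integrable M (\<lambda>\<omega>. (pair_log \<delta> p \<omega>)\<^sup>2)"
  proof (rule integrableI_nonneg)
    show "(\<integral>\<^sup>+\<omega>. ennreal ((pair_log \<delta> p \<omega>)\<^sup>2) \<partial>M) < \<infinity>"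
      using nn_integral_pair_log_square_le[OF assms] by (rule le_less_trans) simp
  qed auto
  show "integrable M (pair_log \<delta> p)"
    using sq by (rule square_integrable_imp_integrable[rotated]) simp
qed

lemma expectation_pair_log_le:
  assumes "p \<in> proper_pairs" "0 < \<delta>" "\<delta> \<le> 1"
  shows "expectation (pair_log \<delta> p) \<le> 8 * B * sqrt \<delta>"
proof -
  have "ennreal (expectation (pair_log \<delta> p)) = (\<integral>\<^sup>+\<omega>. ennreal (pair_log \<delta> p \<omega>) \<partial>M)"
    using integrable_pair_log[OF assms(1,3)] assms(3)
    by (intro nn_integral_eq_integral[symmetric]) (auto simp: pair_log_def log_kernel_nonneg)
  also have "\<dots> \<le> ennreal (8 * B * sqrt \<delta>)"
    using assms(1,2) by (rule nn_integral_pair_log_le)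
  finally show ?thesis
    using B_pos assms by (simp add: ennreal_le_iff)
qed

lemma expectation_pair_log_square_le:
  assumes "p \<in> proper_pairs" "\<delta> \<le> 1"
  shows "expectation (\<lambda>\<omega>. (pair_log \<delta> p \<omega>)\<^sup>2) \<le> 64 * B"
proof -
  have "ennreal (expectation (\<lambda>\<omega>. (pair_log \<delta> p \<omega>)\<^sup>2)) = (\<integral>\<^sup>+\<omega>. ennreal ((pair_log \<delta> p \<omega>)\<^sup>2) \<partial>M)"
    using integrable_pair_log[OF assms] by (intro nn_integral_eq_integral[symmetric]) auto
  also have "\<dots> \<le> ennreal (64 * B)"
    using assms by (rule nn_integral_pair_log_square_le)
  finally show ?thesis
    using B_pos by (simp add: ennreal_le_iff)
qed

lemma indep_var_pair_log:
  assumes "p \<in> proper_pairs" "q \<in> proper_pairs" "{fst p, snd p} \<inter> {fst q, snd q} = {}"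
  shows "indep_var borel (pair_log \<delta> p) borel (pair_log \<delta> q)"
  using assms
    indep_var_functions_of_pairs[of "fst p" "snd p" "fst q" "snd q" "\<lambda>z. log_kernel \<delta> (fst z - snd z)"
      "\<lambda>z. log_kernel \<delta> (fst z - snd z)"]
  by (simp add: pair_log_def[abs_def] proper_pairs_def)

lemma sum_expectation_pair_log_le:
  assumes "0 < \<delta>" "\<delta> \<le> 1"
  shows "(\<Sum>p\<in>dyadic_pairs k k'. expectation (pair_log \<delta> p)) \<le> 72 * B * sqrt \<delta> * 2^(k+k')"
proof -
  have "(\<Sum>p\<in>dyadic_pairs k k'. expectation (pair_log \<delta> p)) \<le> real (card (dyadic_pairs k k')) * (8 * B * sqrt \<delta>)"
    using expectation_pair_log_le[OF _ assms] dyadic_pairs_subset_proper_pairs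
    by (intro sum_bounded_above) blast
  also have "\<dots> \<le> real (9 * 2^k * 2^k') * (8 * B * sqrt \<delta>)"
    using B_pos assms(1) by (intro mult_right_mono) (simp_all only: of_nat_le_iff card_dyadic_pairs_le, simp)
  also have "\<dots> = 72 * B * sqrt \<delta> * 2^(k+k')"
    by (simp add: power_add)
  finally show ?thesis .
qed

lemma second_moment_centered_dyadic_log_sum:
  assumes "\<delta> \<le> 1"
  shows "expectation (\<lambda>\<omega>. (\<Sum>p\<in>dyadic_pairs k k'. pair_log \<delta> p \<omega> - expectation (pair_log \<delta> p))\<^sup>2)
           \<le> 3456 * B * 2^(k+k') * (2^k + 2^k')"
proof -
  let ?P = "dyadic_pairs k k'"
  let ?Y = "\<lambda>p \<omega>. pair_log \<delta> p \<omega> - expectation (pair_log \<delta> p)"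
  have proper: "p \<in> proper_pairs" if "p \<in> ?P" for p
    using that dyadic_pairs_subset_proper_pairs by blast
  note int = integrable_pair_log[OF proper \<open>\<delta> \<le> 1\<close>]
  have "expectation (\<lambda>\<omega>. (\<Sum>p\<in>?P. ?Y p \<omega>)\<^sup>2)
        \<le> (\<Sum>p\<in>?P. real (card {q\<in>?P. {fst p, snd p} \<inter> {fst q, snd q} \<noteq> {}})) * (64 * B)"
  proof (rule integral_square_sum_le[OF finite_dyadic_pairs])
    fix p assume "p \<in> ?P"
    then show "?Y p \<in> borel_measurable M"
      using pair_log_measurable[OF proper] by simp
    show "integrable M (\<lambda>\<omega>. (?Y p \<omega>)\<^sup>2)"
      using int[OF \<open>p \<in> ?P\<close>] by (simp add: power2_diff)
    have "expectation (\<lambda>\<omega>. (?Y p \<omega>)\<^sup>2) = expectation (\<lambda>\<omega>. (pair_log \<delta> p \<omega>)\<^sup>2) - (expectation (pair_log \<delta> p))\<^sup>2"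
      using int[OF \<open>p \<in> ?P\<close>] by (rule variance_eq)
    also have "\<dots> \<le> 64 * B"
      using expectation_pair_log_square_le[OF proper[OF \<open>p \<in> ?P\<close>] \<open>\<delta> \<le> 1\<close>]
        zero_le_power2[of "expectation (pair_log \<delta> p)"] by linarith
    finally show "expectation (\<lambda>\<omega>. (?Y p \<omega>)\<^sup>2) \<le> 64 * B" .
  next
    fix p q assume "p \<in> ?P" "q \<in> ?P" "\<not> {fst p, snd p} \<inter> {fst q, snd q} \<noteq> {}"
    then show "expectation (\<lambda>\<omega>. ?Y p \<omega> * ?Y q \<omega>) = 0"
      using int by (intro indep_var_centered_uncorrelated indep_var_pair_log proper) auto
  qed
  also have "\<dots> \<le> 54 * 2^(k+k') * (2^k + 2^k') * (64 * B)"
    by (intro mult_right_mono sum_card_overlapping_dyadic_pairs_le) (use B_pos in simp)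
  also have "\<dots> = 3456 * B * 2^(k+k') * (2^k + 2^k')"
    by (simp add: power_add algebra_simps)
  finally show ?thesis .
qed

lemma prob_dyadic_log_sum_large:
  assumes "0 < \<delta>" "\<delta> \<le> 1" "144 * B * sqrt \<delta> \<le> e"
  shows "prob {\<omega> \<in> space M. e * 2^(k+k') \<le> dyadic_log_sum \<delta> (\<lambda>i. c i \<omega>) k k'}
           \<le> 13824 * B / e\<^sup>2 * (1 / 2^k + 1 / 2^k')"
proof -
  let ?P = "dyadic_pairs k k'"
  define S where "S \<omega> = (\<Sum>p\<in>?P. pair_log \<delta> p \<omega> - expectation (pair_log \<delta> p))" for \<omega>
  define N :: real where "N = 2^(k+k')"
  have "0 < 144 * B * sqrt \<delta>"
    using B_pos assms(1) by simp
  with assms(3) have "0 < e"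
    by linarith
  have proper: "p \<in> proper_pairs" if "p \<in> ?P" for p
    using that dyadic_pairs_subset_proper_pairs by blast
  note int = integrable_pair_log[OF proper \<open>\<delta> \<le> 1\<close>]
  have [measurable]: "S \<in> borel_measurable M"
    unfolding S_def using pair_log_measurable[OF proper] by measurable
  have "72 * B * sqrt \<delta> * N \<le> e / 2 * N"
    using assms(3) by (intro mult_right_mono) (simp_all add: N_def)
  then have mean: "(\<Sum>p\<in>?P. expectation (pair_log \<delta> p)) \<le> e / 2 * N"
    using sum_expectation_pair_log_le[OF assms(1,2), of k k'] unfolding N_def by linarith
  have "{\<omega> \<in> space M. e * 2^(k+k') \<le> dyadic_log_sum \<delta> (\<lambda>i. c i \<omega>) k k'}
        \<subseteq> {\<omega> \<in> space M. e / 2 * N \<le> \<bar>S \<omega>\<bar>}"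
  proof safe
    fix \<omega> assume "e * 2^(k+k') \<le> dyadic_log_sum \<delta> (\<lambda>i. c i \<omega>) k k'"
    moreover have "dyadic_log_sum \<delta> (\<lambda>i. c i \<omega>) k k' = S \<omega> + (\<Sum>p\<in>?P. expectation (pair_log \<delta> p))"
      by (simp add: S_def dyadic_log_sum_def pair_log_def sum_subtractf)
    ultimately show "e / 2 * N \<le> \<bar>S \<omega>\<bar>"
      using mean by (simp add: N_def)
  qed
  then have "prob {\<omega> \<in> space M. e * 2^(k+k') \<le> dyadic_log_sum \<delta> (\<lambda>i. c i \<omega>) k k'}
             \<le> prob {\<omega> \<in> space M. e / 2 * N \<le> \<bar>S \<omega>\<bar>}"
    by (intro finite_measure_mono) measurable
  also have "\<dots> \<le> expectation (\<lambda>\<omega>. (S \<omega>)\<^sup>2) / (e / 2 * N)\<^sup>2"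
  proof (rule second_moment_method)
    show "integrable M (\<lambda>\<omega>. (S \<omega>)\<^sup>2)"
      unfolding S_def using int pair_log_measurable[OF proper]
      by (intro integrable_square_sum) (auto simp: power2_diff)
  qed (use \<open>0 < e\<close> in \<open>auto simp: N_def\<close>)
  also have "\<dots> \<le> 3456 * B * N * (2^k + 2^k') / (e / 2 * N)\<^sup>2"
    unfolding S_def N_def using second_moment_centered_dyadic_log_sum[OF \<open>\<delta> \<le> 1\<close>]
    by (rule divide_right_mono) simp
  also have "\<dots> = 13824 * B / e\<^sup>2 * (1 / 2^k + 1 / 2^k')"
    using \<open>0 < e\<close> by (simp add: N_def field_simps power_add power2_eq_square)
  finally show ?thesis .
qed

definition dyadic_exceedance :: "real \<Rightarrow> real \<Rightarrow> nat \<Rightarrow> 'a set" where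
  "dyadic_exceedance \<delta> e K = (\<Union>k\<in>{K..2*K}. \<Union>k'\<in>{K..2*K}.
     {\<omega> \<in> space M. e * 2^(k+k') \<le> dyadic_log_sum \<delta> (\<lambda>i. c i \<omega>) k k'})"

lemma dyadic_log_sum_measurable [measurable]:
  "(\<lambda>\<omega>. dyadic_log_sum \<delta> (\<lambda>i. c i \<omega>) k k') \<in> borel_measurable M"
proof -
  have "pair_log \<delta> p \<in> borel_measurable M" if "p \<in> dyadic_pairs k k'" for p
    using that dyadic_pairs_subset_proper_pairs by (intro pair_log_measurable) blast
  then show ?thesis
    unfolding dyadic_log_sum_def pair_log_def[symmetric] by measurable
qed

lemma dyadic_exceedance_sets: "dyadic_exceedance \<delta> e K \<in> sets M"
  unfolding dyadic_exceedance_def by measurable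

lemma prob_dyadic_exceedance_le:
  assumes "0 < \<delta>" "\<delta> \<le> 1" "144 * B * sqrt \<delta> \<le> e"
  shows "prob (dyadic_exceedance \<delta> e K) \<le> 27648 * B / e\<^sup>2 * (real ((K+1)^2) * (1/2)^K)"
proof -
  define A where "A k k' = {\<omega> \<in> space M. e * 2^(k+k') \<le> dyadic_log_sum \<delta> (\<lambda>i. c i \<omega>) k k'}" for k k'
  have [measurable]: "A k k' \<in> sets M" for k k'
    unfolding A_def by measurable
  have A_le: "prob (A k k') \<le> 13824 * B / e\<^sup>2 * (2 * (1/2)^K)" if "K \<le> k" "K \<le> k'" for k k'
  proof -
    have "prob (A k k') \<le> 13824 * B / e\<^sup>2 * (1 / 2^k + 1 / 2^k')"
      unfolding A_def by (rule prob_dyadic_log_sum_large[OF assms])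
    also have "\<dots> \<le> 13824 * B / e\<^sup>2 * (2 * (1/2)^K)"
    proof (rule mult_left_mono)
      have "(1/2::real)^k \<le> (1/2)^K" "(1/2::real)^k' \<le> (1/2)^K"
        using that by (simp_all add: power_decreasing)
      then show "1 / 2^k + 1 / 2^k' \<le> 2 * (1/2::real)^K"
        by (simp add: power_one_over)
    qed (use B_pos in simp)
    finally show ?thesis .
  qed
  have "prob (dyadic_exceedance \<delta> e K) \<le> (\<Sum>k\<in>{K..2*K}. prob (\<Union>k'\<in>{K..2*K}. A k k'))"
    unfolding dyadic_exceedance_def A_def[symmetric]
    by (rule finite_measure_subadditive_finite) auto
  also have "\<dots> \<le> (\<Sum>k\<in>{K..2*K}. \<Sum>k'\<in>{K..2*K}. prob (A k k'))"
    by (intro sum_mono finite_measure_subadditive_finite) auto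
  also have "\<dots> \<le> (\<Sum>k\<in>{K..2*K}. \<Sum>k'\<in>{K..2*K}. 13824 * B / e\<^sup>2 * (2 * (1/2)^K))"
    by (intro sum_mono A_le) auto
  also have "\<dots> = 27648 * B / e\<^sup>2 * (real ((K+1)^2) * (1/2)^K)"
    by (simp add: power2_eq_square algebra_simps add_divide_distrib)
  finally show ?thesis .
qed

lemma AE_eventually_not_dyadic_exceedance:
  assumes "0 < \<delta>" "\<delta> \<le> 1" "144 * B * sqrt \<delta> \<le> e"
  shows "AE \<omega> in M. \<forall>\<^sub>F K in sequentially. \<omega> \<notin> dyadic_exceedance \<delta> e K"
proof -
  have "summable (\<lambda>K. 27648 * B / e\<^sup>2 * (real ((K+1)^2) * (1/2)^K))"
    by (intro summable_mult summable_square_times_half_power)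
  then have "summable (\<lambda>K. prob (dyadic_exceedance \<delta> e K))"
    by (rule summable_comparison_test') (use prob_dyadic_exceedance_le[OF assms] in simp)
  then have "AE \<omega> in M. \<forall>\<^sub>F K in sequentially. \<omega> \<in> space M - dyadic_exceedance \<delta> e K"
    by (intro borel_cantelli_AE1 dyadic_exceedance_sets) (simp_all add: less_top[symmetric])
  then show ?thesis
    by (rule AE_mp) (auto intro!: AE_I2 elim: eventually_mono)
qed

lemma exists_radius:
  assumes "0 < e"
  shows "\<exists>\<delta>>0. \<delta> \<le> 1 \<and> 144 * B * sqrt \<delta> \<le> e"
proof (intro exI conjI)
  let ?\<delta> = "min 1 ((e / (144 * B))\<^sup>2)"
  show "0 < ?\<delta>" "?\<delta> \<le> 1"
    using assms B_pos by simp_all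
  have "sqrt ?\<delta> \<le> sqrt ((e / (144 * B))\<^sup>2)"
    by (rule real_sqrt_le_mono) simp
  also have "\<dots> = e / (144 * B)"
    using assms B_pos by simp
  finally show "144 * B * sqrt ?\<delta> \<le> e"
    using B_pos by (simp add: field_simps)
qed

lemma AE_dyadic_log_sums_eventually_small:
  "AE \<omega> in M. \<forall>e>0. \<exists>\<delta>>0. \<delta> \<le> 1 \<and> (\<exists>K0. \<forall>K\<ge>K0. \<forall>k\<in>{K..2*K}. \<forall>k'\<in>{K..2*K}.
     dyadic_log_sum \<delta> (\<lambda>i. c i \<omega>) k k' < e * 2^(k+k'))"
proof -
  define e :: "nat \<Rightarrow> real" where "e m = 1 / Suc m" for m
  have "\<exists>\<delta>>0. \<delta> \<le> 1 \<and> 144 * B * sqrt \<delta> \<le> e m" for m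
    by (rule exists_radius) (simp add: e_def)
  then obtain \<delta> where \<delta>: "0 < \<delta> m" "\<delta> m \<le> 1" "144 * B * sqrt (\<delta> m) \<le> e m" for m
    by metis
  have "AE \<omega> in M. \<forall>m. \<forall>\<^sub>F K in sequentially. \<omega> \<notin> dyadic_exceedance (\<delta> m) (e m) K"
    unfolding AE_all_countable using AE_eventually_not_dyadic_exceedance[OF \<delta>] by blast
  then have "AE \<omega> in M. \<omega> \<in> space M \<and> (\<forall>m. \<forall>\<^sub>F K in sequentially. \<omega> \<notin> dyadic_exceedance (\<delta> m) (e m) K)"
    using AE_space by simp
  then show ?thesis
  proof (rule AE_mp, intro AE_I2 impI allI)
    fix \<omega> and \<epsilon> :: real
    assume \<omega>: "\<omega> \<in> space M \<and> (\<forall>m. \<forall>\<^sub>F K in sequentially. \<omega> \<notin> dyadic_exceedance (\<delta> m) (e m) K)"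
      and "0 < \<epsilon>"
    obtain m where "e m < \<epsilon>"
      using reals_Archimedean[OF \<open>0 < \<epsilon>\<close>] by (auto simp: e_def field_simps)
    obtain K0 where K0: "\<And>K. K0 \<le> K \<Longrightarrow> \<omega> \<notin> dyadic_exceedance (\<delta> m) (e m) K"
      using \<omega> unfolding eventually_sequentially by blast
    have "dyadic_log_sum (\<delta> m) (\<lambda>i. c i \<omega>) k k' < \<epsilon> * 2^(k+k')"
      if "K0 \<le> K" "k \<in> {K..2*K}" "k' \<in> {K..2*K}" for K k k'
    proof -
      have "dyadic_log_sum (\<delta> m) (\<lambda>i. c i \<omega>) k k' < e m * 2^(k+k')"
        using K0[OF \<open>K0 \<le> K\<close>] \<omega> that(2,3) unfolding dyadic_exceedance_def by force
      also have "\<dots> \<le> \<epsilon> * 2^(k+k')"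
        using \<open>e m < \<epsilon>\<close> by simp
      finally show ?thesis .
    qed
    then show "\<exists>\<delta>>0. \<delta> \<le> 1 \<and> (\<exists>K0. \<forall>K\<ge>K0. \<forall>k\<in>{K..2*K}. \<forall>k'\<in>{K..2*K}.
                 dyadic_log_sum \<delta> (\<lambda>i. c i \<omega>) k k' < \<epsilon> * 2^(k+k'))"
      using \<delta> by blast
  qed
qed

end

theorem lemma2p3:
  fixes M :: "'a measure" and c :: "nat \<Rightarrow> 'a \<Rightarrow> real"
    and f :: "real \<Rightarrow> real" and B :: real and lam :: real
    and l :: "nat \<Rightarrow> real"
  assumes "prob_space M"
    and "prob_space.indep_vars M (\<lambda>_. borel) c {1..}"
    and "\<And>k. k \<ge> 1 \<Longrightarrow> distributed M lborel (c k) (\<lambda>x. ennreal (f x))"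
    and "f \<in> borel_measurable lborel"
    and "\<And>x. 0 \<le> f x" and "\<And>x. f x \<le> B"
    and "\<And>x. x \<notin> {0..1} \<Longrightarrow> f x = 0"
    and "AE x in lborel. x \<in> {0..1} \<longrightarrow> f x > 0"
    and "lam > 0" and "\<And>k. l k = exp (- lam * real k)"
  shows "AE \<omega> in M. \<forall>\<epsilon>>0. \<exists>\<delta>>0. \<forall>\<^sub>F n in sequentially.
           \<forall>n'\<in>scales n. \<forall>n''\<in>scales n.
             (1 / real (card (blockA n' \<times> blockA n''))) *
             (\<Sum>(i,j)\<in>{(i,j). i \<in> blockA n' \<and> j \<in> blockA n'' \<and> i \<noteq> j \<and>
                             \<bar>c i \<omega> - c j \<omega>\<bar> < \<delta>}.
                 - ln \<bar>c i \<omega> - c j \<omega>\<bar>) < \<epsilon>"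
proof -
  interpret indep_bounded_density M c f "max B 1"
  proof (rule indep_bounded_density.intro[OF assms(1)], rule indep_bounded_density_axioms.intro)
    show "\<And>x. f x \<le> max B 1"
      using assms(6) by (simp add: le_max_iff_disj)
  qed (use assms(2,3) in simp_all)
  show ?thesis
  proof (rule AE_mp[OF AE_dyadic_log_sums_eventually_small], intro AE_I2 impI allI)
    fix \<omega> and \<epsilon> :: real
    assume "\<forall>e>0. \<exists>\<delta>>0. \<delta> \<le> 1 \<and> (\<exists>K0. \<forall>K\<ge>K0. \<forall>k\<in>{K..2*K}. \<forall>k'\<in>{K..2*K}.
                     dyadic_log_sum \<delta> (\<lambda>i. c i \<omega>) k k' < e * 2^(k+k'))"
      and "0 < \<epsilon>"
    then obtain \<delta> K0 where "0 < \<delta>" "\<delta> \<le> 1"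
      and K0: "\<forall>K\<ge>K0. \<forall>k\<in>{K..2*K}. \<forall>k'\<in>{K..2*K}. dyadic_log_sum \<delta> (\<lambda>i. c i \<omega>) k k' < \<epsilon> * 2^(k+k')"
      by blast
    have "\<forall>\<^sub>F n in sequentially. max 2 (2^K0) \<le> n"
      by (rule eventually_ge_at_top)
    then show "\<exists>\<delta>>0. \<forall>\<^sub>F n in sequentially. \<forall>n'\<in>scales n. \<forall>n''\<in>scales n.
             (1 / real (card (blockA n' \<times> blockA n''))) *
             (\<Sum>(i,j)\<in>{(i,j). i \<in> blockA n' \<and> j \<in> blockA n'' \<and> i \<noteq> j \<and> \<bar>c i \<omega> - c j \<omega>\<bar> < \<delta>}.
                 - ln \<bar>c i \<omega> - c j \<omega>\<bar>) < \<epsilon>"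
      using \<open>0 < \<delta>\<close> close_pairs_log_average_lt[OF \<open>0 < \<epsilon>\<close> \<open>\<delta> \<le> 1\<close>, of K0 "\<lambda>i. c i \<omega>"] K0
      by (auto elim!: eventually_mono)
  qed
qed

end
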